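(* Let $G$ be an abelian group of order $v$, and let $m>1$, $k\ge 1$ be integers. A non-disjoint $(v,m,k,1)$-SEDF exists in $G$ if and only if $m=2$ and $v=k^2$.
   Context: Groups are written additively. For subsets $A,B$ of $G$, $\Delta(A,B)$ is the multiset $\{a-b:a\in A,b\in B\}$ and $\lambda G$ is the multiset with each element of $G$ exactly $\lambda$ times. For $G$ of order $v$ and $m>1$, a family of $k$-subsets $\{A_1,\dots,A_m\}$ of $G$ (not required to be disjoint) is a non-disjoint $(v,m,k,\lambda)$-SEDF if for each $1\le i\le m$ the multiset union $\bigcup_{j\neq i}\Delta(A_i,A_j)$ equals $\lambda G$. *)

theory Defs
  imports Main "HOL-Library.Multiset"
begin

definition diff_mset :: "'a::ab_group_add set \<Rightarrow> 'a set \<Rightarrow> 'a multiset" where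
  "diff_mset A B = image_mset (\<lambda>(a, b). a - b) (mset_set (A \<times> B))"

text \<open>Non-disjoint (v,m,k,lam)-SEDF in the finite abelian group 'a (v = CARD('a)),
  given as an indexed family A 0, ..., A (m-1) of k-subsets (not required disjoint).\<close>
definition nd_SEDF :: "(nat \<Rightarrow> 'a::{ab_group_add,finite} set) \<Rightarrow> nat \<Rightarrow> nat \<Rightarrow> nat \<Rightarrow> bool" where
  "nd_SEDF A m k lam \<longleftrightarrow> m > 1 \<and> (\<forall>i<m. card (A i) = k) \<and>
     (\<forall>i<m. (\<Sum>j\<in>{..<m} - {i}. diff_mset (A i) (A j)) = repeat_mset lam (mset_set UNIV))"

end

theory Submission
  imports Defs "HOL-Algebra.Sylow"
begin

text \<open>
  Counting the differences of \<open>A\<^sub>0\<close> gives \<open>\<lambda>v = (m - 1)k\<^sup>2\<close>. For \<open>\<lambda> = 1\<close>, the element 0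
  occurs among the differences \<open>A\<^sub>0 - A\<^sub>j\<close>, so some \<open>x\<close> lies in \<open>A\<^sub>0 \<inter> A\<^sub>j\<close>; a third set
  \<open>A\<^sub>l\<close> would then contain a \<open>y\<close> with \<open>y - x\<close> occurring in both \<open>A\<^sub>l - A\<^sub>0\<close> and \<open>A\<^sub>l - A\<^sub>j\<close>. Conversely, an abelian group of order \<open>k\<^sup>2\<close> has a subgroup
  \<open>K\<close> of order \<open>k\<close> (converse of Lagrange, from Cauchy's theorem by lifting subgroups of
  quotients), and for a transversal \<open>T\<close> of its cosets every group element is uniquely
  \<open>a - t\<close> with \<open>a \<in> K\<close>, \<open>t \<in> T\<close>; so \<open>\<Delta>(K,T) = G\<close> and \<open>\<Delta>(T,K) = -\<Delta>(K,T) = G\<close>.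
\<close>

lemma (in normal) card_Union_subgroup_FactGroup:
  assumes "finite (carrier G)" and "subgroup A (G Mod H)"
  shows "card (\<Union>A) = card A * card H"
proof -
  have A: "A \<subseteq> rcosets H"
    using subgroup.subset[OF assms(2)] by (simp add: FactGroup_def)
  have "card H * card A = card (\<Union>A)"
  proof (rule card_partition)
    show "finite A"
      using A rcosets_subset_PowG[OF is_subgroup] assms(1)
      by (meson finite_Pow_iff finite_subset subset_trans)
    show "finite (\<Union>A)"
      using A rcosets_part_G[OF is_subgroup] assms(1) by (metis Union_mono finite_subset)
    show "card c = card H" if "c \<in> A" for c
      using A card_rcosets_equal subset that by (metis subsetD)
    show "c1 \<inter> c2 = {}" if "c1 \<in> A" "c2 \<in> A" "c1 \<noteq> c2" for c1 c2
      using that A rcos_disjoint[OF is_subgroup] by (auto simp: pairwise_def disjnt_def)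
  qed
  then show ?thesis by (simp add: ac_simps)
qed

text \<open>The union of the cosets forming a subgroup of order \<open>p\<close> of \<open>G Mod H\<close> (Cauchy's theorem,
  here the Sylow theorem for \<open>p\<^sup>1\<close>) is a subgroup of order \<open>p * card H\<close>.\<close>

lemma (in comm_group) exists_subgroup_card_prime_mult:
  assumes "finite (carrier G)" and "subgroup H G"
    and "prime p" and "p dvd card (rcosets H)"
  shows "\<exists>K. subgroup K G \<and> card K = p * card H"
proof -
  interpret normal H G using subgroup_imp_normal[OF assms(2)] .
  have "order (G Mod H) = p * (card (rcosets H) div p)"
    using assms(4) by (simp add: order_def FactGroup_def)
  then obtain P where P: "subgroup P (G Mod H)" "card P = p"
    using sylow_thm[of p "G Mod H" 1] assms(1,3) factorgroup_is_group
    by (fastforce simp: FactGroup_def RCOSETS_def)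
  then show ?thesis
    using factgroup_subgroup_union_subgroup[OF P(1)]
      card_Union_subgroup_FactGroup[OF assms(1) P(1)] by auto
qed

lemma (in comm_group) exists_subgroup_card_mult:
  assumes "finite (carrier G)" and "subgroup H G" and "d dvd card (rcosets H)"
  shows "\<exists>K. subgroup K G \<and> card K = d * card H"
  using assms(2,3)
proof (induction d arbitrary: H rule: less_induct)
  case (less d H)
  have index: "card (rcosets H) * card H = order G"
    using lagrange[OF less.prems(1)] .
  then have "card (rcosets H) \<noteq> 0" and "card H \<noteq> 0"
    using assms(1) order_gt_0_iff_finite by (metis mult_0 mult_0_right not_gr0)+
  show ?case
  proof (cases "d = 1")
    case True
    then show ?thesis using less.prems(1) by auto
  next
    case False
    have "d \<noteq> 0"
      using less.prems(2) \<open>card (rcosets H) \<noteq> 0\<close> by auto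
    with False obtain p where p: "prime p" "p dvd d"
      using prime_factor_nat by blast
    then obtain d' where d: "d = p * d'" by blast
    obtain H' where H': "subgroup H' G" "card H' = p * card H"
      using exists_subgroup_card_prime_mult[OF assms(1) less.prems(1) p(1)]
        p(2) less.prems(2) dvd_trans by blast
    have "p * card (rcosets H') * card H = card (rcosets H) * card H"
      using lagrange[OF H'(1)] index H'(2) by (simp add: ac_simps)
    then have "p * card (rcosets H') = card (rcosets H)"
      using \<open>card H \<noteq> 0\<close> by simp
    then have "d' dvd card (rcosets H')"
      using less.prems(2) d prime_gt_0_nat[OF p(1)] by (metis nat_mult_dvd_cancel1)
    moreover have "d' < d"
      using d \<open>d \<noteq> 0\<close> prime_gt_1_nat[OF p(1)] by simp
    ultimately obtain K where "subgroup K G" "card K = d' * card H'"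
      using less.IH H'(1) by blast
    then show ?thesis using H'(2) d by (auto simp: ac_simps)
  qed
qed

corollary (in comm_group) exists_subgroup_of_card:
  assumes "finite (carrier G)" and "d dvd order G"
  shows "\<exists>K. subgroup K G \<and> card K = d"
  using exists_subgroup_card_mult[OF assms(1) triv_subgroup] assms card_rcosets_triv
  by auto

definition add_group :: "'a::ab_group_add monoid" where
  "add_group = \<lparr>carrier = UNIV, mult = (+), one = 0\<rparr>"

lemma add_group_simps [simp]:
  "carrier add_group = UNIV" "mult add_group = (+)" "one add_group = 0"
  by (simp_all add: add_group_def)

lemma comm_group_add_group: "comm_group (add_group :: 'a::ab_group_add monoid)"
  by (rule comm_groupI) (auto simp: add.assoc add.commute intro: exI[of _ "- _"])

lemma inv_add_group [simp]: "inv\<^bsub>add_group\<^esub> (x::'a::ab_group_add) = - x"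
proof -
  interpret comm_group "add_group :: 'a monoid" by (rule comm_group_add_group)
  show ?thesis by (rule inv_equality) auto
qed

lemma subgroup_add_group_iff:
  "subgroup K (add_group :: 'a::ab_group_add monoid) \<longleftrightarrow>
     0 \<in> K \<and> (\<forall>x\<in>K. \<forall>y\<in>K. x + y \<in> K) \<and> (\<forall>x\<in>K. - x \<in> K)"
  by (auto simp: subgroup_def)

lemma exists_difference_transversal:
  fixes K :: "'a::ab_group_add set"
  assumes "subgroup K add_group"
  shows "\<exists>T. bij_betw (\<lambda>(a, t). a - t) (K \<times> T) UNIV"
proof -
  have zero: "0 \<in> K" and add: "\<And>x y. x \<in> K \<Longrightarrow> y \<in> K \<Longrightarrow> x + y \<in> K"
    and diff: "\<And>x y. x \<in> K \<Longrightarrow> y \<in> K \<Longrightarrow> x - y \<in> K"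
    using assms unfolding subgroup_add_group_iff by (metis diff_conv_add_uminus)+
  \<comment> \<open>\<open>rep\<close> is constant on cosets of \<open>K\<close>, so its range is a transversal\<close>
  define rep where "rep x = (SOME t. t - x \<in> K)" for x
  have rep_mem: "rep x - x \<in> K" for x
    unfolding rep_def by (rule someI[of _ x]) (simp add: zero)
  have rep_eq: "rep x = rep y" if "x - y \<in> K" for x y
  proof -
    have "t - x \<in> K \<longleftrightarrow> t - y \<in> K" for t
      using add[of "t - x" "x - y"] diff[of "t - y" "x - y"] that by auto
    then show ?thesis by (simp add: rep_def)
  qed
  have "bij_betw (\<lambda>(a, t). a - t) (K \<times> range rep) UNIV"
  proof (rule bij_betw_imageI)
    show "inj_on (\<lambda>(a, t). a - t) (K \<times> range rep)"
    proof (rule inj_onI, clarsimp)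
      fix a a' u u'
      assume "a \<in> K" "a' \<in> K" and eq: "a - rep u = a' - rep u'"
      then have "u - u' = (rep u' - u') - (rep u - u) + (a - a')"
        by (simp add: algebra_simps)
      then have "u - u' \<in> K"
        using rep_mem add diff \<open>a \<in> K\<close> \<open>a' \<in> K\<close> by metis
      then show "a = a' \<and> rep u = rep u'"
        using rep_eq eq by auto
    qed
    have "x \<in> (\<lambda>(a, t). a - t) ` (K \<times> range rep)" for x
      using rep_mem[of "- x"]
      by (intro image_eqI[of _ _ "(x + rep (- x), rep (- x))"]) (auto simp: add.commute)
    then show "(\<lambda>(a, t). a - t) ` (K \<times> range rep) = UNIV"
      by blast
  qed
  then show ?thesis by blast
qed

lemma mem_diff_mset:
  assumes "finite A" and "finite B"
  shows "x \<in># diff_mset A B \<longleftrightarrow> (\<exists>a\<in>A. \<exists>b\<in>B. x = a - b)"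
  using assms by (auto simp: diff_mset_def)

lemma size_diff_mset:
  assumes "finite A" and "finite B"
  shows "size (diff_mset A B) = card A * card B"
  using assms by (simp add: diff_mset_def card_cartesian_product)

lemma diff_mset_swap: "diff_mset B A = image_mset uminus (diff_mset A B)"
proof -
  have "mset_set (B \<times> A) = image_mset prod.swap (mset_set (A \<times> B))"
    by (simp add: image_mset_mset_set product_swap)
  then show ?thesis
    by (simp add: diff_mset_def multiset.map_comp comp_def case_prod_beta)
qed

lemma diff_mset_eq_mset_set_UNIV:
  fixes A B :: "'a::{ab_group_add,finite} set"
  assumes "bij_betw (\<lambda>(a, b). a - b) (A \<times> B) UNIV"
  shows "diff_mset A B = mset_set UNIV"
  using assms unfolding diff_mset_def bij_betw_def by (simp add: image_mset_mset_set)

lemma image_mset_uminus_mset_set_UNIV: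
  "image_mset uminus (mset_set (UNIV :: 'a::{ab_group_add,finite} set)) = mset_set UNIV"
  by (simp add: image_mset_mset_set inj_def surj_def)

lemma nd_SEDF_of_difference_bijection:
  fixes A B :: "'a::{ab_group_add,finite} set"
  assumes "bij_betw (\<lambda>(a, b). a - b) (A \<times> B) UNIV" and "card A = k" and "card B = k"
  shows "nd_SEDF (\<lambda>i. if i = 0 then A else B) 2 k 1"
proof -
  have "diff_mset A B = mset_set UNIV" and "diff_mset B A = mset_set UNIV"
    using diff_mset_eq_mset_set_UNIV[OF assms(1)]
    by (simp_all add: diff_mset_swap[of B A] image_mset_uminus_mset_set_UNIV)
  moreover have "{..<2::nat} - {0} = {1}" and "{..<2::nat} - {1} = {0}"
    by auto
  ultimately show ?thesis
    using assms(2,3) by (auto simp: nd_SEDF_def less_2_cases_iff)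
qed

lemma nd_SEDF_card:
  fixes A :: "nat \<Rightarrow> 'a::{ab_group_add,finite} set"
  assumes "nd_SEDF A m k lam"
  shows "lam * card (UNIV :: 'a set) = (m - 1) * k ^ 2"
proof -
  have "lam * card (UNIV :: 'a set) = size (\<Sum>j\<in>{..<m} - {0}. diff_mset (A 0) (A j))"
    using assms by (simp add: nd_SEDF_def size_mset_set)
  also have "\<dots> = (\<Sum>j\<in>{..<m} - {0}. k * k)"
    unfolding size_multiset_sum
    by (rule sum.cong) (use assms in \<open>auto simp: nd_SEDF_def size_diff_mset\<close>)
  also have "\<dots> = (m - 1) * k ^ 2"
    using assms by (simp add: nd_SEDF_def power2_eq_square)
  finally show ?thesis .
qed

lemma nd_SEDF_incidence_le:
  fixes A :: "nat \<Rightarrow> 'a::{ab_group_add,finite} set"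
  assumes "nd_SEDF A m k lam" and "l < m" and "y \<in> A l"
  shows "card {j \<in> {..<m} - {l}. x \<in> A j} \<le> lam"
proof -
  \<comment> \<open>each \<open>A j\<close> containing \<open>x\<close> contributes \<open>y - x\<close> to the differences of \<open>A l\<close>\<close>
  let ?J = "{j \<in> {..<m} - {l}. x \<in> A j}"
  let ?c = "\<lambda>j. count (diff_mset (A l) (A j)) (y - x)"
  have "card ?J = (\<Sum>j\<in>?J. 1)"
    by simp
  also have "\<dots> \<le> (\<Sum>j\<in>?J. ?c j)"
    using assms(3) by (intro sum_mono) (auto simp: Suc_le_eq mem_diff_mset)
  also have "\<dots> \<le> (\<Sum>j\<in>{..<m} - {l}. ?c j)"
    by (rule sum_mono2) auto
  also have "\<dots> = count (\<Sum>j\<in>{..<m} - {l}. diff_mset (A l) (A j)) (y - x)"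
    by (simp add: count_sum)
  also have "\<dots> = lam"
    using assms(1,2) by (simp add: nd_SEDF_def)
  finally show ?thesis .
qed

lemma nd_SEDF_lambda_one_two_sets:
  fixes A :: "nat \<Rightarrow> 'a::{ab_group_add,finite} set"
  assumes "nd_SEDF A m k 1"
  shows "m = 2"
proof (rule ccontr)
  assume "m \<noteq> 2"
  with assms have "m \<ge> 3" by (simp add: nd_SEDF_def)
  have "count (\<Sum>j\<in>{..<m} - {0}. diff_mset (A 0) (A j)) 0 = 1"
    using assms \<open>m \<ge> 3\<close> by (simp add: nd_SEDF_def)
  then obtain j where "j \<in> {..<m} - {0}" "count (diff_mset (A 0) (A j)) 0 \<noteq> 0"
    by (metis count_sum sum.neutral zero_neq_one)
  then have j: "j < m" "j \<noteq> 0" "0 \<in># diff_mset (A 0) (A j)"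
    by (auto simp: not_in_iff[symmetric])
  then obtain x where x: "x \<in> A 0" "x \<in> A j"
    by (auto simp: mem_diff_mset)
  define l where "l = (if j = 1 then 2 else 1 :: nat)"
  have l: "l < m" "l \<noteq> 0" "l \<noteq> j"
    using \<open>m \<ge> 3\<close> by (auto simp: l_def)
  have "card (UNIV :: 'a set) > 0"
    by (simp add: card_gt_0_iff)
  then have "k \<noteq> 0"
    using nd_SEDF_card[OF assms] by auto
  then obtain y where "y \<in> A l"
    using assms l(1) by (fastforce simp: nd_SEDF_def)
  have "{0, j} \<subseteq> {j' \<in> {..<m} - {l}. x \<in> A j'}"
    using j x l by auto
  then have "card {0, j} \<le> card {j' \<in> {..<m} - {l}. x \<in> A j'}"
    by (rule card_mono[rotated]) simp
  also have "\<dots> \<le> 1"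
    using nd_SEDF_incidence_le[OF assms l(1) \<open>y \<in> A l\<close>] .
  finally show False
    using j(2) by simp
qed

theorem theorem2p10:
  fixes m k :: nat
  assumes "m > 1" and "k \<ge> 1"
  shows "(\<exists>A :: nat \<Rightarrow> 'a::{ab_group_add,finite} set. nd_SEDF A m k 1)
           \<longleftrightarrow> (m = 2 \<and> card (UNIV :: 'a set) = k ^ 2)"
proof
  assume "\<exists>A :: nat \<Rightarrow> 'a set. nd_SEDF A m k 1"
  then obtain A :: "nat \<Rightarrow> 'a set" where A: "nd_SEDF A m k 1" ..
  then show "m = 2 \<and> card (UNIV :: 'a set) = k ^ 2"
    using nd_SEDF_lambda_one_two_sets[OF A] nd_SEDF_card[OF A] by simp
next
  assume sizes: "m = 2 \<and> card (UNIV :: 'a set) = k ^ 2"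
  interpret comm_group "add_group :: 'a monoid"
    by (rule comm_group_add_group)
  obtain K :: "'a set" where K: "subgroup K add_group" "card K = k"
    using exists_subgroup_of_card[of k] sizes by (auto simp: order_def power2_eq_square)
  obtain T where T: "bij_betw (\<lambda>(a, t). a - t) (K \<times> T) UNIV"
    using exists_difference_transversal[OF K(1)] by blast
  have "k * card T = k * k"
    using bij_betw_same_card[OF T] K(2) sizes by (simp add: card_cartesian_product power2_eq_square)
  then have "card T = k"
    using assms(2) by simp
  then show "\<exists>A :: nat \<Rightarrow> 'a set. nd_SEDF A m k 1"
    using nd_SEDF_of_difference_bijection[OF T K(2)] sizes by blast
qed

end
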